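(* Let $m,\hat m\in\mathbb{N}$ and $\bar m=m+\hat m$. Then (i) $$\sum_{M}p^{|\bigcup_{\Gamma\in M}\Gamma|}\le c_m\frac{n^{m v_{G_0}}p^{m e_{G_0}}}{\Psi_{\min}^{m-1}},$$ where the sum runs over all sets of connected copies $M$ of size $m$; (ii) $$\sum_{M,\hat M}p^{|\bigcup_{\Gamma\in M\cup\hat M}\Gamma|}\le c_{\bar m}\frac{n^{\bar m v_{G_0}}p^{\bar m e_{G_0}}}{\Psi_{\min}^{\bar m-2}\min\{\Psi_{\min},1\}},$$ where the sum runs over all pairs of a set of connected copies $M$ of size $m$ and a set of connected copies $\hat M$ of size $\hat m$. Here $c_k:=(v_{G_0}!)^{k-1}\,2^{\frac12k(k-1)e_{G_0}}\,\operatorname{aut}(G_0)^{-k}$ for $k\in\mathbb{N}$.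
   Context: $G_0$ is a graph with at least one edge and no isolated vertices; $v_H,e_H,\operatorname{aut}(H)$ denote the numbers of vertices, edges and automorphisms of a graph $H$. $E$ is the set of edges of the complete graph $K_n$ and $p\in(0,1)$. $\mathcal{M}$ is the set of all $\Gamma\subset E$ such that the graph consisting of the edges $\Gamma$ and their endpoints is isomorphic to $G_0$ (copies of $G_0$). For $\Gamma\in\mathcal{M}$, the neighborhood $\mathcal{M}_\Gamma$ is the set of $\Gamma'\in\mathcal{M}$ with $\Gamma'\cap\Gamma\neq\emptyset$. A set of connected copies of size $m$ is a sequence $M=(\Gamma_1,\dots,\Gamma_m)$ with $\Gamma_1\in\mathcal{M}$ and $\Gamma_i\in\bigcup_{j<i}\mathcal{M}_{\Gamma_j}$ for $2\le i\le m$. $\Psi_{\min}=\min\{n^{v_H}p^{e_H}:H\subset G_0,\ e_H\ge1\}$. *)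

theory Defs
  imports Complex_Main
begin

text \<open>A graph without isolated vertices is represented by its edge set
  (a finite set of 2-element sets); its vertex set is the union of the edges.\<close>

definition verts :: "'a set set \<Rightarrow> 'a set" where
  "verts G = \<Union> G"

definition is_graph :: "'a set set \<Rightarrow> bool" where
  "is_graph G \<longleftrightarrow> finite G \<and> (\<forall>e\<in>G. card e = 2)"

definition Kn_edges :: "nat \<Rightarrow> nat set set" where
  "Kn_edges n = {{i, j} | i j. i < n \<and> j < n \<and> i \<noteq> j}"

definition graph_iso :: "'a set set \<Rightarrow> 'b set set \<Rightarrow> bool" where
  "graph_iso G H \<longleftrightarrow> (\<exists>f. bij_betw f (verts G) (verts H) \<and> (\<lambda>e. f ` e) ` G = H)"

definition copies :: "'a set set \<Rightarrow> nat \<Rightarrow> nat set set set" where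
  "copies G0 n = {\<Gamma>. \<Gamma> \<subseteq> Kn_edges n \<and> graph_iso G0 \<Gamma>}"

text \<open>Sets of connected copies of size m, as sequences (lists):
  each entry is a copy, and each entry after the first shares an edge with an earlier one.\<close>
definition connected_copies :: "'a set set \<Rightarrow> nat \<Rightarrow> nat \<Rightarrow> nat set set list set" where
  "connected_copies G0 n m =
     {xs. length xs = m \<and> (\<forall>i<m. xs ! i \<in> copies G0 n) \<and>
          (\<forall>i. 0 < i \<and> i < m \<longrightarrow> (\<exists>j<i. xs ! i \<inter> xs ! j \<noteq> {}))}"

definition aut :: "'a set set \<Rightarrow> nat" where
  "aut G = card {f. bij_betw f (verts G) (verts G) \<and> (\<lambda>e. f ` e) ` G = G
                    \<and> (\<forall>x. x \<notin> verts G \<longrightarrow> f x = x)}"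

definition Psi_min :: "'a set set \<Rightarrow> nat \<Rightarrow> real \<Rightarrow> real" where
  "Psi_min G0 n p = Min {real n ^ card W * p ^ card F | W F.
       F \<subseteq> G0 \<and> F \<noteq> {} \<and> \<Union> F \<subseteq> W \<and> W \<subseteq> verts G0}"

definition c_const :: "'a set set \<Rightarrow> nat \<Rightarrow> real" where
  "c_const G0 k = real (fact (card (verts G0))) ^ (k - 1)
      * 2 powr (real (k * (k - 1) * card G0) / 2) / real (aut G0) ^ k"

end

theory Submission
  imports Defs "HOL-Library.FuncSet"
begin

(*
  Fix a finite edge set U and group the copies Gamma of G0 by their trace F = Gamma \<inter> U.
  A copy with trace F is the image of an embedding of G0 into {0..<n} that covers the vertices
  of F; there are at most v! n^(v - |\<Union>F|) such embeddings, and every copy is the image of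
  aut G0 of them. So the copies with trace F have total weight (sum of p^|Gamma - U|) at most
  v! n^v p^e / (aut G0 n^|\<Union>F| p^|F|), and n^|\<Union>F| p^|F| \<ge> Psi_min when F is nonempty,
  because F is then isomorphic to a subgraph of G0. Summing over the 2^|U| possible traces
  bounds the total weight of the one-copy extensions of U.

  Sets of connected copies are built one copy at a time. With U the union of the copies chosen
  so far (at most j e edges), the next copy must meet U, which costs a factor
  2^(j e) v! n^v p^e / (aut G0 Psi_min); by induction this gives (i). In (ii) the first copy
  of the second sequence need not meet the first one; its trace may be empty, so it costs
  min Psi_min 1 in place of Psi_min.
*)

lemma prod_diff_le_fact: "(\<Prod>i = 0..<k. n - i) \<le> (fact n :: nat)"
proof (cases "k \<le> n")
  case True
  have "(\<Prod>i = 0..<k. n - i) \<le> (\<Prod>i = 0..<k. n - i) * (\<Prod>i = k..<n. n - i)"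
    by (simp add: Suc_le_eq)
  also have "\<dots> = fact n"
    using True by (simp add: fact_prod_rev prod.atLeastLessThan_concat)
  finally show ?thesis .
next
  case False
  then have "(\<Prod>i = 0..<k. n - i) = 0" by auto
  then show ?thesis by (metis le0)
qed

lemma card_inj_covering_le:
  assumes "finite V" "finite W" "finite C"
  shows "card {f \<in> V \<rightarrow>\<^sub>E C. inj_on f V \<and> W \<subseteq> f ` V}
           \<le> fact (card V) * card C ^ (card V - card W)"
proof -
  define S where "S = {f \<in> V \<rightarrow>\<^sub>E C. inj_on f V \<and> W \<subseteq> f ` V}"
  define I where "I = {g \<in> W \<rightarrow>\<^sub>E V. inj_on g W}"
  define T where "T = (SIGMA g:I. (V - g ` W) \<rightarrow>\<^sub>E C)"
  \<comment> \<open>\<open>f\<close> is recovered from the positions of the preimages of \<open>W\<close> and its values elsewhere\<close>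
  define code where
    "code f = (restrict (inv_into V f) W, restrict f (V - inv_into V f ` W))" for f :: "'a \<Rightarrow> 'b"
  have inj: "inj_on code S"
  proof (rule inj_onI)
    fix f1 f2 assume f1: "f1 \<in> S" and f2: "f2 \<in> S" and eq: "code f1 = code f2"
    have inv: "inv_into V f1 w = inv_into V f2 w" if "w \<in> W" for w
      using eq that unfolding code_def by (metis fst_conv restrict_apply')
    then have inv_im: "inv_into V f1 ` W = inv_into V f2 ` W" by auto
    show "f1 = f2"
    proof (rule PiE_ext)
      show "f1 \<in> V \<rightarrow>\<^sub>E C" "f2 \<in> V \<rightarrow>\<^sub>E C" using f1 f2 unfolding S_def by auto
      fix x assume x: "x \<in> V"
      show "f1 x = f2 x"
      proof (cases "x \<in> inv_into V f1 ` W")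
        case True
        then obtain w where w: "w \<in> W" "x = inv_into V f1 w" by blast
        then have "f1 x = w" "f2 x = w"
          using f1 f2 inv[OF w(1)] unfolding S_def by (auto simp: f_inv_into_f subset_iff)
        then show ?thesis by simp
      next
        case False
        then show ?thesis
          using eq x inv_im unfolding code_def by (metis DiffI restrict_apply' snd_conv)
      qed
    qed
  qed
  have sub: "code ` S \<subseteq> T"
  proof
    fix y assume "y \<in> code ` S"
    then obtain f where f: "f \<in> S" "y = code f" by blast
    then have "W \<subseteq> f ` V" "f \<in> V \<rightarrow>\<^sub>E C" unfolding S_def by auto
    then show "y \<in> T"
      unfolding f(2) code_def T_def I_def
      by (auto simp: inv_into_into inj_on_inv_into subset_iff)
  qed
  have "finite I"
    unfolding I_def by (rule finite_subset[of _ "W \<rightarrow>\<^sub>E V"]) (auto intro: finite_PiE assms)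
  then have "finite T"
    unfolding T_def using assms by (intro finite_SigmaI finite_PiE) auto
  with inj sub have "card S \<le> card T" by (intro card_inj_on_le)
  also have "card T = (\<Sum>g\<in>I. card C ^ card (V - g ` W))"
    unfolding T_def I_def using assms
    by (subst card_SigmaI) (auto intro!: finite_PiE sum.cong simp: card_funcsetE)
  also have "\<dots> = card I * card C ^ (card V - card W)"
  proof -
    have "card (V - g ` W) = card V - card W" if "g \<in> I" for g
      using that assms unfolding I_def
      by (subst card_Diff_subset) (auto simp: card_image finite_subset PiE_iff)
    then show ?thesis by simp
  qed
  also have "card I \<le> fact (card V)"
    unfolding I_def using card_inj_on_subset_funcset[of W V W] assms prod_diff_le_fact
    by simp
  finally show ?thesis unfolding S_def by (simp add: mult_right_mono)
qed

lemma power_card_Un: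
  fixes x :: "'a :: monoid_mult"
  assumes "finite A" "finite B"
  shows "x ^ card (A \<union> B) = x ^ card A * x ^ card (B - A)"
proof -
  have "card (A \<union> B) = card A + card (B - A)"
    using assms card_Un_disjoint[of A "B - A"] by (simp add: Un_Diff_cancel)
  then show ?thesis by (simp add: power_add)
qed

lemma double_sum_lessThan: "2 * (\<Sum>i<k. i) = k * (k - 1 :: nat)"
proof (induction k)
  case (Suc k)
  then have "2 * (\<Sum>i<Suc k. i) = k * (k - 1) + 2 * k" by simp
  also have "\<dots> = Suc k * k" by (cases k) (simp_all add: algebra_simps)
  finally show ?case by simp
qed simp

lemma sum_lessThan_add: "(\<Sum>i<a + b. i) = (\<Sum>i<a. i) + a * b + (\<Sum>i<b. i :: nat)"
  by (induction b) (simp_all add: algebra_simps)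

lemma c_const_eq:
  "c_const G0 k = fact (card (verts G0)) ^ (k - 1) * 2 ^ ((\<Sum>i<k. i) * card G0) / aut G0 ^ k"
proof -
  have exponent: "real (k * (k - 1) * card G0) / 2 = real ((\<Sum>i<k. i) * card G0)"
    by (simp only: double_sum_lessThan[symmetric] mult.assoc of_nat_mult)
  have "(2::real) powr (real (k * (k - 1) * card G0) / 2) = 2 ^ ((\<Sum>i<k. i) * card G0)"
    unfolding exponent by (rule powr_realpow) simp
  then show ?thesis
    unfolding c_const_def by simp
qed

lemma finite_copies: "finite (copies G0 n)"
proof -
  have "finite (Kn_edges n)"
    unfolding Kn_edges_def by (rule finite_subset[of _ "Pow {..<n}"]) auto
  then show ?thesis
    unfolding copies_def by (auto intro: rev_finite_subset[of "Pow (Kn_edges n)"])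
qed

lemma copies_0_empty: "G0 \<noteq> {} \<Longrightarrow> copies G0 0 = {}"
  unfolding copies_def graph_iso_def Kn_edges_def by auto

lemma connected_copies_0_empty: "G0 \<noteq> {} \<Longrightarrow> 1 \<le> j \<Longrightarrow> connected_copies G0 0 j = {}"
  unfolding connected_copies_def copies_0_empty by (force simp: Suc_le_eq)

lemma length_connected_copies: "xs \<in> connected_copies G0 n j \<Longrightarrow> length xs = j"
  unfolding connected_copies_def by simp

lemma set_connected_copies_subset: "xs \<in> connected_copies G0 n j \<Longrightarrow> set xs \<subseteq> copies G0 n"
  unfolding connected_copies_def by (auto simp: in_set_conv_nth)

lemma finite_connected_copies: "finite (connected_copies G0 n j)"
  using finite_lists_length_eq[OF finite_copies, of G0 n j]
  by (rule finite_subset[rotated]) (auto dest: length_connected_copies set_connected_copies_subset)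

lemma connected_copies_1: "connected_copies G0 n 1 = (\<lambda>\<Gamma>. [\<Gamma>]) ` copies G0 n"
  unfolding connected_copies_def by (auto simp: length_Suc_conv)

lemma sum_connected_copies_1:
  "(\<Sum>M\<in>connected_copies G0 n 1. g M) = (\<Sum>\<Gamma>\<in>copies G0 n. g [\<Gamma>])"
  unfolding connected_copies_1 by (simp add: sum.reindex inj_on_def)

lemma snoc_in_connected_copies_iff:
  assumes "xs \<noteq> []"
  shows "xs @ [\<Gamma>] \<in> connected_copies G0 n (Suc (length xs)) \<longleftrightarrow>
           xs \<in> connected_copies G0 n (length xs) \<and> \<Gamma> \<in> copies G0 n \<and>
           \<Gamma> \<inter> \<Union>(set xs) \<noteq> {}"
proof -
  let ?ys = "xs @ [\<Gamma>]" and ?j = "length xs"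
  have ys_nth: "?ys ! i = xs ! i" if "i < ?j" for i
    using that by (simp add: nth_append)
  have split_last:
    "(\<forall>i. 0 < i \<and> i < Suc ?j \<longrightarrow> Q i) \<longleftrightarrow> (\<forall>i. 0 < i \<and> i < ?j \<longrightarrow> Q i) \<and> Q ?j"
    for Q using assms by (auto simp: less_Suc_eq)
  have copies_iff: "(\<forall>i<Suc ?j. ?ys ! i \<in> copies G0 n) \<longleftrightarrow>
                      (\<forall>i<?j. xs ! i \<in> copies G0 n) \<and> \<Gamma> \<in> copies G0 n"
    by (auto simp: ys_nth less_Suc_eq)
  have earlier_iff:
    "(\<exists>k<i. ?ys ! i \<inter> ?ys ! k \<noteq> {}) \<longleftrightarrow> (\<exists>k<i. xs ! i \<inter> xs ! k \<noteq> {})"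
    if "i < ?j" for i
    using that by (simp add: ys_nth cong: conj_cong)
  have last_iff: "(\<exists>k<?j. \<Gamma> \<inter> ?ys ! k \<noteq> {}) \<longleftrightarrow> \<Gamma> \<inter> \<Union>(set xs) \<noteq> {}"
  proof -
    have "(\<exists>k<?j. \<Gamma> \<inter> ?ys ! k \<noteq> {}) \<longleftrightarrow> (\<exists>k<?j. \<Gamma> \<inter> xs ! k \<noteq> {})"
      by (simp add: ys_nth cong: conj_cong)
    also have "\<dots> \<longleftrightarrow> \<not> (\<forall>X\<in>set xs. \<Gamma> \<inter> X = {})"
      by (simp add: all_set_conv_all_nth)
    finally show ?thesis by blast
  qed
  show ?thesis
    unfolding connected_copies_def
    by (simp add: split_last copies_iff earlier_iff last_iff cong: conj_cong) blast
qed

lemma bij_betw_snoc_connected_copies: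
  assumes "1 \<le> j"
  shows "bij_betw (\<lambda>(xs, \<Gamma>). xs @ [\<Gamma>])
           (SIGMA xs:connected_copies G0 n j. {\<Gamma> \<in> copies G0 n. \<Gamma> \<inter> \<Union>(set xs) \<noteq> {}})
           (connected_copies G0 n (Suc j))"
proof (rule bij_betw_byWitness[where f' = "\<lambda>ys. (butlast ys, last ys)"])
  have "xs @ [\<Gamma>] \<in> connected_copies G0 n (Suc j)"
    if "xs \<in> connected_copies G0 n j" "\<Gamma> \<in> copies G0 n" "\<Gamma> \<inter> \<Union>(set xs) \<noteq> {}" for xs \<Gamma>
  proof -
    have len: "length xs = j" using that(1) by (rule length_connected_copies)
    then have "xs \<noteq> []" using assms by auto
    then show ?thesis using snoc_in_connected_copies_iff[of xs \<Gamma> G0 n] that len by simp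
  qed
  then show "(\<lambda>(xs, \<Gamma>). xs @ [\<Gamma>]) ` (SIGMA xs:connected_copies G0 n j.
               {\<Gamma> \<in> copies G0 n. \<Gamma> \<inter> \<Union>(set xs) \<noteq> {}}) \<subseteq> connected_copies G0 n (Suc j)"
    by auto
  show "(\<lambda>ys. (butlast ys, last ys)) ` connected_copies G0 n (Suc j)
          \<subseteq> (SIGMA xs:connected_copies G0 n j. {\<Gamma> \<in> copies G0 n. \<Gamma> \<inter> \<Union>(set xs) \<noteq> {}})"
  proof (rule image_subsetI)
    fix ys assume ys: "ys \<in> connected_copies G0 n (Suc j)"
    then have "length ys = Suc j" by (rule length_connected_copies)
    then have ne: "ys \<noteq> []" and len: "length (butlast ys) = j" by auto
    have "butlast ys \<noteq> []" using len assms by (cases "butlast ys") auto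
    moreover have "butlast ys @ [last ys] \<in> connected_copies G0 n (Suc (length (butlast ys)))"
      using ys ne len by simp
    ultimately show "(butlast ys, last ys) \<in> (SIGMA xs:connected_copies G0 n j.
                       {\<Gamma> \<in> copies G0 n. \<Gamma> \<inter> \<Union>(set xs) \<noteq> {}})"
      using snoc_in_connected_copies_iff[of "butlast ys" "last ys" G0 n] len by simp
  qed
qed (auto dest: length_connected_copies intro!: append_butlast_last_id)

lemma sum_connected_copies_Suc:
  assumes "1 \<le> j"
  shows "(\<Sum>ys\<in>connected_copies G0 n (Suc j). g ys)
           = (\<Sum>xs\<in>connected_copies G0 n j.
                \<Sum>\<Gamma>\<in>{\<Gamma> \<in> copies G0 n. \<Gamma> \<inter> \<Union>(set xs) \<noteq> {}}. g (xs @ [\<Gamma>]))"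
proof -
  have "(\<Sum>ys\<in>connected_copies G0 n (Suc j). g ys)
          = (\<Sum>(xs, \<Gamma>)\<in>(SIGMA xs:connected_copies G0 n j.
               {\<Gamma> \<in> copies G0 n. \<Gamma> \<inter> \<Union>(set xs) \<noteq> {}}). g (xs @ [\<Gamma>]))"
    using bij_betw_snoc_connected_copies[OF assms]
    by (subst sum.reindex_bij_betw[symmetric]) (auto simp: case_prod_unfold)
  also have "\<dots> = (\<Sum>xs\<in>connected_copies G0 n j.
                    \<Sum>\<Gamma>\<in>{\<Gamma> \<in> copies G0 n. \<Gamma> \<inter> \<Union>(set xs) \<noteq> {}}. g (xs @ [\<Gamma>]))"
    by (rule sum.Sigma[symmetric]) (simp_all add: finite_connected_copies finite_copies)
  finally show ?thesis .
qed

locale pattern_graph =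
  fixes G0 :: "'a set set"
  assumes is_graph: "is_graph G0"
begin

abbreviation V :: "'a set" where "V \<equiv> verts G0"

lemma finite_G0: "finite G0"
  using is_graph unfolding is_graph_def by simp

lemma finite_edge: "e \<in> G0 \<Longrightarrow> finite e"
  using is_graph unfolding is_graph_def by (metis card.infinite zero_neq_numeral)

lemma finite_V: "finite V"
  unfolding verts_def using finite_G0 finite_edge by blast

lemma edge_subset_V: "e \<in> G0 \<Longrightarrow> e \<subseteq> V"
  unfolding verts_def by blast

lemma card_V_pos: "G0 \<noteq> {} \<Longrightarrow> 0 < card V"
  using is_graph finite_V unfolding is_graph_def verts_def
  by (auto simp: card_gt_0_iff) (metis card.empty zero_neq_numeral)

definition embeddings :: "nat \<Rightarrow> ('a \<Rightarrow> nat) set" where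
  "embeddings n = {f \<in> V \<rightarrow>\<^sub>E {..<n}. inj_on f V}"

definition copy_of :: "('a \<Rightarrow> nat) \<Rightarrow> nat set set" where
  "copy_of f = image f ` G0"

lemma finite_embeddings: "finite (embeddings n)"
  unfolding embeddings_def by (rule finite_subset[of _ "V \<rightarrow>\<^sub>E {..<n}"]) (auto intro: finite_PiE finite_V)

lemma card_embeddings_le: "card (embeddings n) \<le> n ^ card V"
proof -
  have "card (embeddings n) \<le> card (V \<rightarrow>\<^sub>E {..<n})"
    unfolding embeddings_def by (rule card_mono) (auto intro: finite_PiE finite_V)
  then show ?thesis using finite_V by (simp add: card_funcsetE)
qed

lemma Union_copy_of: "\<Union>(copy_of f) = f ` V"
  unfolding copy_of_def verts_def by auto

lemma inj_on_image_edges: "inj_on f V \<Longrightarrow> inj_on (image f) G0"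
  by (rule inj_on_subset[OF inj_on_image_Pow]) (auto dest: edge_subset_V)

lemma card_copy_of: "inj_on f V \<Longrightarrow> card (copy_of f) = card G0"
  unfolding copy_of_def by (rule card_image) (rule inj_on_image_edges)

lemma copies_subset_copy_of: "copies G0 n \<subseteq> copy_of ` embeddings n"
proof
  fix \<Gamma> assume \<Gamma>: "\<Gamma> \<in> copies G0 n"
  then obtain h where h: "bij_betw h V (verts \<Gamma>)" "image h ` G0 = \<Gamma>"
    unfolding copies_def graph_iso_def by auto
  have "verts \<Gamma> \<subseteq> {..<n}"
    using \<Gamma> unfolding copies_def Kn_edges_def verts_def by blast
  then have "restrict h V \<in> embeddings n"
    using h(1) unfolding embeddings_def bij_betw_def inj_on_def by auto
  moreover have "copy_of (restrict h V) = \<Gamma>"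
    unfolding copy_of_def h(2)[symmetric] using edge_subset_V
    by (intro image_cong refl) (auto simp: subset_iff)
  ultimately show "\<Gamma> \<in> copy_of ` embeddings n" by blast
qed

lemma card_copy: "\<Gamma> \<in> copies G0 n \<Longrightarrow> card \<Gamma> = card G0"
  using copies_subset_copy_of card_copy_of unfolding embeddings_def by blast

lemma finite_copy: "\<Gamma> \<in> copies G0 n \<Longrightarrow> finite \<Gamma>"
  using copies_subset_copy_of finite_G0 unfolding copy_of_def by blast

definition automorphisms :: "('a \<Rightarrow> 'a) set" where
  "automorphisms = {f. bij_betw f V V \<and> image f ` G0 = G0 \<and> (\<forall>x. x \<notin> V \<longrightarrow> f x = x)}"

lemma aut_eq_card_automorphisms: "aut G0 = card automorphisms"
  unfolding aut_def automorphisms_def ..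

lemma aut_pos: "0 < aut G0"
proof -
  have "automorphisms \<subseteq> (\<lambda>g x. if x \<in> V then g x else x) ` (V \<rightarrow>\<^sub>E V)"
  proof
    fix f assume f: "f \<in> automorphisms"
    then have "f = (\<lambda>x. if x \<in> V then restrict f V x else x)" "restrict f V \<in> V \<rightarrow>\<^sub>E V"
      unfolding automorphisms_def bij_betw_def by auto
    then show "f \<in> (\<lambda>g x. if x \<in> V then g x else x) ` (V \<rightarrow>\<^sub>E V)" by blast
  qed
  then have "finite automorphisms"
    by (rule finite_subset) (intro finite_imageI finite_PiE finite_V)
  moreover have "id \<in> automorphisms"
    unfolding automorphisms_def by simp
  ultimately show ?thesis
    unfolding aut_eq_card_automorphisms by (auto simp: card_gt_0_iff)
qed

lemma aut_le_card_embeddings_onto: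
  assumes "\<Gamma> \<in> copies G0 n"
  shows "aut G0 \<le> card {f \<in> embeddings n. copy_of f = \<Gamma>}"
proof -
  obtain h where h: "h \<in> embeddings n" "copy_of h = \<Gamma>"
    using copies_subset_copy_of assms by blast
  then have h_inj: "inj_on h V" and h_range: "h ` V \<subseteq> {..<n}"
    unfolding embeddings_def by auto
  define compose where "compose \<sigma> = restrict (h \<circ> \<sigma>) V" for \<sigma>
  have "compose ` automorphisms \<subseteq> {f \<in> embeddings n. copy_of f = \<Gamma>}"
  proof clarify
    fix \<sigma> assume "\<sigma> \<in> automorphisms"
    then have \<sigma>: "bij_betw \<sigma> V V" "image \<sigma> ` G0 = G0"
      unfolding automorphisms_def by auto
    have "inj_on (h \<circ> \<sigma>) V" "(h \<circ> \<sigma>) ` V \<subseteq> {..<n}"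
      using \<sigma>(1) h_inj h_range by (auto simp: bij_betw_def comp_inj_on image_comp[symmetric])
    then have "compose \<sigma> \<in> embeddings n"
      unfolding embeddings_def compose_def by (auto simp: inj_on_def)
    moreover have "copy_of (compose \<sigma>) = image h ` image \<sigma> ` G0"
      unfolding copy_of_def compose_def image_image using edge_subset_V
      by (intro image_cong refl) (auto simp: subset_iff)
    ultimately show "compose \<sigma> \<in> embeddings n \<and> copy_of (compose \<sigma>) = \<Gamma>"
      using \<sigma>(2) h(2) unfolding copy_of_def by simp
  qed
  moreover have "inj_on compose automorphisms"
  proof (rule inj_onI, rule ext)
    fix \<sigma> \<tau> x assume \<sigma>: "\<sigma> \<in> automorphisms" and \<tau>: "\<tau> \<in> automorphisms"
      and eq: "compose \<sigma> = compose \<tau>"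
    show "\<sigma> x = \<tau> x"
    proof (cases "x \<in> V")
      case True
      then have "h (\<sigma> x) = h (\<tau> x)" "\<sigma> x \<in> V" "\<tau> x \<in> V"
        using fun_cong[OF eq, of x] \<sigma> \<tau>
        unfolding compose_def automorphisms_def bij_betw_def by auto
      then show ?thesis using h_inj by (meson inj_onD)
    next
      case False
      then show ?thesis using \<sigma> \<tau> unfolding automorphisms_def by simp
    qed
  qed
  ultimately show ?thesis
    unfolding aut_eq_card_automorphisms
    by (intro card_inj_on_le) (auto intro: finite_subset[OF _ finite_embeddings])
qed

lemma card_mult_aut_le_embeddings:
  assumes "C \<subseteq> copies G0 n"
  shows "card C * aut G0 \<le> card {f \<in> embeddings n. copy_of f \<in> C}"
proof -
  have "card C * aut G0 = (\<Sum>\<Gamma>\<in>C. aut G0)" by simp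
  also have "\<dots> \<le> (\<Sum>\<Gamma>\<in>C. card {f \<in> embeddings n. copy_of f = \<Gamma>})"
    by (rule sum_mono) (use assms aut_le_card_embeddings_onto in blast)
  also have "\<dots> = card (\<Union>\<Gamma>\<in>C. {f \<in> embeddings n. copy_of f = \<Gamma>})"
    using assms finite_copies finite_embeddings
    by (intro card_UN_disjoint[symmetric]) (auto intro: finite_subset)
  also have "(\<Union>\<Gamma>\<in>C. {f \<in> embeddings n. copy_of f = \<Gamma>}) = {f \<in> embeddings n. copy_of f \<in> C}"
    by blast
  finally show ?thesis .
qed

lemma card_copies_mult_aut_le: "card (copies G0 n) * aut G0 \<le> n ^ card V"
  using card_mult_aut_le_embeddings[of "copies G0 n" n] card_embeddings_le[of n]
    card_mono[OF finite_embeddings, of "{f \<in> embeddings n. copy_of f \<in> copies G0 n}" n]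
  by auto

lemma card_copies_covering_le:
  assumes "finite W"
  shows "card {\<Gamma> \<in> copies G0 n. W \<subseteq> \<Union>\<Gamma>} * aut G0 \<le> fact (card V) * n ^ (card V - card W)"
proof -
  have "{f \<in> embeddings n. copy_of f \<in> {\<Gamma> \<in> copies G0 n. W \<subseteq> \<Union>\<Gamma>}}
          \<subseteq> {f \<in> V \<rightarrow>\<^sub>E {..<n}. inj_on f V \<and> W \<subseteq> f ` V}"
    unfolding embeddings_def Union_copy_of[symmetric] by auto
  then have "card {f \<in> embeddings n. copy_of f \<in> {\<Gamma> \<in> copies G0 n. W \<subseteq> \<Union>\<Gamma>}}
               \<le> card {f \<in> V \<rightarrow>\<^sub>E {..<n}. inj_on f V \<and> W \<subseteq> f ` V}"
    by (rule card_mono[rotated]) (simp add: finite_V finite_PiE)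
  also have "\<dots> \<le> fact (card V) * n ^ (card V - card W)"
    using card_inj_covering_le[OF finite_V assms finite_lessThan[of n]] by simp
  finally show ?thesis
    using card_mult_aut_le_embeddings[of "{\<Gamma> \<in> copies G0 n. W \<subseteq> \<Union>\<Gamma>}" n] by auto
qed

lemma subset_copy_obtains_subgraph:
  assumes "\<Gamma> \<in> copies G0 n" "F \<subseteq> \<Gamma>"
  obtains H where "H \<subseteq> G0" "card H = card F" "card (\<Union>H) = card (\<Union>F)" "H = {} \<longleftrightarrow> F = {}"
proof -
  obtain h where h: "h \<in> embeddings n" "copy_of h = \<Gamma>"
    using copies_subset_copy_of assms(1) by blast
  then have h_inj: "inj_on h V" unfolding embeddings_def by simp
  define H where "H = {e \<in> G0. h ` e \<in> F}"
  have F_eq: "F = image h ` H"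
    using assms(2) h(2) unfolding H_def copy_of_def by blast
  have "H \<subseteq> G0" unfolding H_def by blast
  moreover have "card H = card F"
    unfolding F_eq by (rule card_image[symmetric], rule inj_on_subset[OF inj_on_image_edges[OF h_inj]])
      (simp add: H_def)
  moreover have "card (\<Union>H) = card (\<Union>F)"
    unfolding F_eq image_Union[symmetric]
    by (rule card_image[symmetric], rule inj_on_subset[OF h_inj]) (auto simp: H_def verts_def)
  moreover have "H = {} \<longleftrightarrow> F = {}" unfolding F_eq by simp
  ultimately show ?thesis using that by blast
qed

lemma finite_Union_copy:
  assumes "\<Gamma> \<in> copies G0 n"
  shows "finite (\<Union>\<Gamma>)"
proof -
  obtain f where "\<Gamma> = copy_of f" using copies_subset_copy_of assms by blast
  then show ?thesis using finite_V by (simp add: Union_copy_of)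
qed

lemma card_subset_copy_le:
  assumes "\<Gamma> \<in> copies G0 n" "F \<subseteq> \<Gamma>"
  shows "card F \<le> card G0" "card (\<Union>F) \<le> card V"
proof -
  obtain H where H: "H \<subseteq> G0" "card H = card F" "card (\<Union>H) = card (\<Union>F)"
    by (rule subset_copy_obtains_subgraph[OF assms])
  then show "card F \<le> card G0" using finite_G0 card_mono by metis
  show "card (\<Union>F) \<le> card V"
    using H finite_V card_mono[of V "\<Union>H"] unfolding verts_def by auto
qed

lemma card_copies_with_trace_mult_aut_le:
  assumes "\<Gamma>\<^sub>0 \<in> copies G0 n" "\<Gamma>\<^sub>0 \<inter> U = F"
  shows "card {\<Gamma> \<in> copies G0 n. \<Gamma> \<inter> U = F} * aut G0 \<le> fact (card V) * n ^ (card V - card (\<Union>F))"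
proof -
  have "finite (\<Union>F)"
    using finite_Union_copy[OF assms(1)] assms(2) by (meson Union_mono finite_subset inf_le1)
  then have "card {\<Gamma> \<in> copies G0 n. \<Union>F \<subseteq> \<Union>\<Gamma>} * aut G0 \<le> fact (card V) * n ^ (card V - card (\<Union>F))"
    by (rule card_copies_covering_le)
  moreover have "card {\<Gamma> \<in> copies G0 n. \<Gamma> \<inter> U = F} \<le> card {\<Gamma> \<in> copies G0 n. \<Union>F \<subseteq> \<Union>\<Gamma>}"
    by (rule card_mono) (auto simp: finite_copies)
  ultimately show ?thesis by (meson le_trans mult_le_mono1)
qed

lemma finite_Union_connected_copies: "M \<in> connected_copies G0 n j \<Longrightarrow> finite (\<Union>(set M))"
  using set_connected_copies_subset finite_copy by blast

lemma card_Union_connected_copies_le: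
  assumes "M \<in> connected_copies G0 n j"
  shows "card (\<Union>(set M)) \<le> j * card G0"
proof -
  have "card (\<Union>(set M)) \<le> (\<Sum>\<Gamma>\<in>set M. card \<Gamma>)"
    using assms set_connected_copies_subset finite_copy by (auto intro!: card_Union_le_sum_card)
  also have "\<dots> = (\<Sum>\<Gamma>\<in>set M. card G0)"
    using set_connected_copies_subset[OF assms] card_copy by (intro sum.cong) auto
  also have "\<dots> = card (set M) * card G0" by simp
  also have "\<dots> \<le> j * card G0"
    using card_length[of M] length_connected_copies[OF assms] by simp
  finally show ?thesis .
qed

end

locale copy_sums = pattern_graph +
  fixes n :: nat and p :: real
  assumes G0_nonempty: "G0 \<noteq> {}" and n_pos: "0 < n" and p_pos: "0 < p"
begin

abbreviation Psi :: real where "Psi \<equiv> Psi_min G0 n p"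

definition Phi :: real where "Phi = real n ^ card V * p ^ card G0"

text \<open>\<open>extension_bound d\<close> bounds the total weight of the copies with a prescribed trace on a
  fixed edge set, whenever that trace \<open>F\<close> has \<open>n^|\<Union>F| p^|F| \<ge> d\<close>.\<close>
definition extension_bound :: "real \<Rightarrow> real" where
  "extension_bound d = fact (card V) * Phi / (real (aut G0) * d)"

lemma Phi_power: "real n ^ (k * card V) * p ^ (k * card G0) = Phi ^ k"
  unfolding Phi_def power_mult_distrib power_mult[symmetric] by (simp add: mult.commute)

lemma
  shows Psi_le: "\<lbrakk>F \<subseteq> G0; F \<noteq> {}\<rbrakk> \<Longrightarrow> Psi \<le> real n ^ card (\<Union>F) * p ^ card F"
    and Psi_pos: "0 < Psi"
proof -
  define S where "S = {real n ^ card W * p ^ card F | W F. F \<subseteq> G0 \<and> F \<noteq> {} \<and> \<Union>F \<subseteq> W \<and> W \<subseteq> V}"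
  have Psi_eq: "Psi = Min S" unfolding Psi_min_def S_def ..
  have "S \<subseteq> (\<lambda>(W, F). real n ^ card W * p ^ card F) ` (Pow V \<times> Pow G0)"
    unfolding S_def by auto
  then have finite_S: "finite S"
    by (rule finite_subset) (simp add: finite_V finite_G0)
  show "Psi \<le> real n ^ card (\<Union>F) * p ^ card F" if "F \<subseteq> G0" "F \<noteq> {}" for F
  proof -
    have "real n ^ card (\<Union>F) * p ^ card F \<in> S"
      using that unfolding S_def verts_def by blast
    then show ?thesis unfolding Psi_eq using finite_S by simp
  qed
  have "real n ^ card V * p ^ card G0 \<in> S"
    unfolding S_def verts_def using G0_nonempty by blast
  then have "Psi \<in> S" unfolding Psi_eq using finite_S by (intro Min_in) auto
  then show "0 < Psi" unfolding S_def using n_pos p_pos by auto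
qed

lemma Psi_le_subset_copy:
  assumes "\<Gamma> \<in> copies G0 n" "F \<subseteq> \<Gamma>" "F \<noteq> {}"
  shows "Psi \<le> real n ^ card (\<Union>F) * p ^ card F"
  using subset_copy_obtains_subgraph[OF assms(1,2)] Psi_le assms(3) by metis

lemma extension_bound_nonneg: "0 < d \<Longrightarrow> 0 \<le> extension_bound d"
  unfolding extension_bound_def Phi_def using p_pos by simp

lemma extension_bound_antimono: "0 < d \<Longrightarrow> d \<le> d' \<Longrightarrow> extension_bound d' \<le> extension_bound d"
  unfolding extension_bound_def Phi_def using p_pos aut_pos
  by (intro divide_left_mono mult_left_mono mult_pos_pos) auto

lemma sum_copies_with_trace_le:
  assumes "\<Gamma>\<^sub>0 \<in> copies G0 n" "\<Gamma>\<^sub>0 \<inter> U = F"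
  shows "(\<Sum>\<Gamma>\<in>{\<Gamma> \<in> copies G0 n. \<Gamma> \<inter> U = F}. p ^ card (\<Gamma> - U))
           \<le> extension_bound (real n ^ card (\<Union>F) * p ^ card F)"
proof -
  define C where "C = {\<Gamma> \<in> copies G0 n. \<Gamma> \<inter> U = F}"
  have F_sub: "F \<subseteq> \<Gamma>\<^sub>0" using assms(2) by blast
  have "real (card C) * aut G0 \<le> fact (card V) * real n ^ (card V - card (\<Union>F))"
    using of_nat_mono[OF card_copies_with_trace_mult_aut_le[OF assms]] unfolding C_def by simp
  then have card_C: "real (card C) \<le> fact (card V) * real n ^ (card V - card (\<Union>F)) / aut G0"
    using aut_pos by (simp add: field_simps)
  have "p ^ card (\<Gamma> - U) = p ^ (card G0 - card F)" if "\<Gamma> \<in> C" for \<Gamma>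
  proof -
    have "\<Gamma> \<in> copies G0 n" "\<Gamma> \<inter> U = F" using that unfolding C_def by auto
    then show ?thesis using finite_copy card_copy by (metis card_Diff_subset_Int finite_Int)
  qed
  then have "(\<Sum>\<Gamma>\<in>C. p ^ card (\<Gamma> - U)) = card C * p ^ (card G0 - card F)"
    by simp
  also have "\<dots> \<le> fact (card V) * real n ^ (card V - card (\<Union>F)) / aut G0 * p ^ (card G0 - card F)"
    using card_C p_pos by (intro mult_right_mono) auto
  also have "\<dots> = extension_bound (real n ^ card (\<Union>F) * p ^ card F)"
    using card_subset_copy_le[OF assms(1) F_sub] n_pos p_pos
    by (simp add: extension_bound_def Phi_def power_diff field_simps)
  finally show ?thesis unfolding C_def .
qed

lemma sum_copies_by_trace_le:
  assumes "finite U" "0 < d"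
    and trace_weight: "\<And>\<Gamma>. \<Gamma> \<in> copies G0 n \<Longrightarrow> \<Gamma> \<inter> U \<in> \<F> \<Longrightarrow>
                          d \<le> real n ^ card (\<Union>(\<Gamma> \<inter> U)) * p ^ card (\<Gamma> \<inter> U)"
  shows "(\<Sum>\<Gamma>\<in>{\<Gamma> \<in> copies G0 n. \<Gamma> \<inter> U \<in> \<F>}. p ^ card (\<Gamma> - U)) \<le> 2 ^ card U * extension_bound d"
proof -
  let ?C = "{\<Gamma> \<in> copies G0 n. \<Gamma> \<inter> U \<in> \<F>}"
  have "(\<Sum>\<Gamma>\<in>?C. p ^ card (\<Gamma> - U)) = (\<Sum>F\<in>Pow U. \<Sum>\<Gamma>\<in>{\<Gamma> \<in> ?C. \<Gamma> \<inter> U = F}. p ^ card (\<Gamma> - U))"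
    using assms(1) by (intro sum.group[symmetric]) (auto simp: finite_copies)
  also have "\<dots> \<le> (\<Sum>F\<in>Pow U. extension_bound d)"
  proof (rule sum_mono)
    fix F
    show "(\<Sum>\<Gamma>\<in>{\<Gamma> \<in> ?C. \<Gamma> \<inter> U = F}. p ^ card (\<Gamma> - U)) \<le> extension_bound d"
    proof (cases "{\<Gamma> \<in> ?C. \<Gamma> \<inter> U = F} = {}")
      case True
      then show ?thesis using extension_bound_nonneg[OF assms(2)] by (simp only: sum.empty)
    next
      case False
      then obtain \<Gamma>\<^sub>0 where \<Gamma>\<^sub>0: "\<Gamma>\<^sub>0 \<in> copies G0 n" "\<Gamma>\<^sub>0 \<inter> U = F" "F \<in> \<F>" by blast
      then have "{\<Gamma> \<in> ?C. \<Gamma> \<inter> U = F} = {\<Gamma> \<in> copies G0 n. \<Gamma> \<inter> U = F}" by blast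
      moreover have "extension_bound (real n ^ card (\<Union>F) * p ^ card F) \<le> extension_bound d"
        using trace_weight[of \<Gamma>\<^sub>0] \<Gamma>\<^sub>0 assms(2) by (intro extension_bound_antimono) auto
      ultimately show ?thesis using sum_copies_with_trace_le[OF \<Gamma>\<^sub>0(1,2)] by simp
    qed
  qed
  also have "\<dots> = 2 ^ card U * extension_bound d"
    using assms(1) by (simp add: card_Pow)
  finally show ?thesis .
qed

lemma sum_copies_le:
  assumes "finite U"
  shows "(\<Sum>\<Gamma>\<in>copies G0 n. p ^ card (\<Gamma> - U)) \<le> 2 ^ card U * extension_bound (min Psi 1)"
proof -
  have "min Psi 1 \<le> real n ^ card (\<Union>(\<Gamma> \<inter> U)) * p ^ card (\<Gamma> \<inter> U)" if "\<Gamma> \<in> copies G0 n" for \<Gamma>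
    using Psi_le_subset_copy[OF that, of "\<Gamma> \<inter> U"] by (cases "\<Gamma> \<inter> U = {}") auto
  then show ?thesis
    using sum_copies_by_trace_le[OF assms, of "min Psi 1" UNIV] Psi_pos by simp
qed

lemma sum_copies_meeting_le:
  assumes "finite U"
  shows "(\<Sum>\<Gamma>\<in>{\<Gamma> \<in> copies G0 n. \<Gamma> \<inter> U \<noteq> {}}. p ^ card (\<Gamma> - U)) \<le> 2 ^ card U * extension_bound Psi"
  using sum_copies_by_trace_le[OF assms Psi_pos, of "- {{}}"] Psi_le_subset_copy by simp

lemma sum_connected_copies_1_le: "(\<Sum>M\<in>connected_copies G0 n 1. p ^ card (\<Union>(set M))) \<le> Phi / aut G0"
proof -
  have "(\<Sum>M\<in>connected_copies G0 n 1. p ^ card (\<Union>(set M))) = (\<Sum>\<Gamma>\<in>copies G0 n. p ^ card G0)"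
    unfolding sum_connected_copies_1 by (intro sum.cong) (simp_all add: card_copy)
  also have "\<dots> = card (copies G0 n) * p ^ card G0" by simp
  also have "\<dots> \<le> real n ^ card V / aut G0 * p ^ card G0"
  proof (intro mult_right_mono)
    have "real (card (copies G0 n)) * aut G0 \<le> real n ^ card V"
      using of_nat_mono[OF card_copies_mult_aut_le[of n]] by simp
    then show "real (card (copies G0 n)) \<le> real n ^ card V / aut G0"
      using aut_pos by (simp add: field_simps)
  qed (use p_pos in simp)
  finally show ?thesis unfolding Phi_def by simp
qed

lemma sum_connected_copies_1_Un_le:
  assumes "finite U" "card U \<le> k * card G0"
  shows "(\<Sum>M\<in>connected_copies G0 n 1. p ^ card (U \<union> \<Union>(set M)))
           \<le> p ^ card U * (2 ^ (k * card G0) * extension_bound (min Psi 1))"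
proof -
  have "(\<Sum>M\<in>connected_copies G0 n 1. p ^ card (U \<union> \<Union>(set M)))
          = p ^ card U * (\<Sum>\<Gamma>\<in>copies G0 n. p ^ card (\<Gamma> - U))"
    unfolding sum_connected_copies_1 sum_distrib_left
    by (intro sum.cong) (simp_all add: power_card_Un assms finite_copy)
  also have "\<dots> \<le> p ^ card U * (2 ^ card U * extension_bound (min Psi 1))"
    using sum_copies_le[OF assms(1)] p_pos by (intro mult_left_mono) auto
  also have "\<dots> \<le> p ^ card U * (2 ^ (k * card G0) * extension_bound (min Psi 1))"
    using assms(2) p_pos Psi_pos extension_bound_nonneg[of "min Psi 1"]
    by (intro mult_left_mono mult_right_mono power_increasing) auto
  finally show ?thesis .
qed

lemma sum_connected_copies_Suc_le:
  assumes "finite U" "card U \<le> k * card G0" "1 \<le> j"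
  shows "(\<Sum>M\<in>connected_copies G0 n (Suc j). p ^ card (U \<union> \<Union>(set M)))
           \<le> (\<Sum>M\<in>connected_copies G0 n j. p ^ card (U \<union> \<Union>(set M)))
               * (2 ^ ((k + j) * card G0) * extension_bound Psi)"
proof -
  have "(\<Sum>\<Gamma>\<in>{\<Gamma> \<in> copies G0 n. \<Gamma> \<inter> \<Union>(set M) \<noteq> {}}. p ^ card (U \<union> \<Union>(set (M @ [\<Gamma>]))))
          \<le> p ^ card (U \<union> \<Union>(set M)) * (2 ^ ((k + j) * card G0) * extension_bound Psi)"
    if M: "M \<in> connected_copies G0 n j" for M
  proof -
    define U' where "U' = U \<union> \<Union>(set M)"
    have "finite U'"
      unfolding U'_def using assms(1) finite_Union_connected_copies[OF M] by simp
    have "card U' \<le> (k + j) * card G0"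
      unfolding U'_def using card_Un_le[of U "\<Union>(set M)"] assms(2) card_Union_connected_copies_le[OF M]
      by (simp add: algebra_simps)
    have "(\<Sum>\<Gamma>\<in>{\<Gamma> \<in> copies G0 n. \<Gamma> \<inter> \<Union>(set M) \<noteq> {}}. p ^ card (U \<union> \<Union>(set (M @ [\<Gamma>]))))
            = p ^ card U' * (\<Sum>\<Gamma>\<in>{\<Gamma> \<in> copies G0 n. \<Gamma> \<inter> \<Union>(set M) \<noteq> {}}. p ^ card (\<Gamma> - U'))"
    proof -
      have "p ^ card (U \<union> \<Union>(set (M @ [\<Gamma>]))) = p ^ card U' * p ^ card (\<Gamma> - U')"
        if "\<Gamma> \<in> copies G0 n" for \<Gamma>
      proof -
        have "U \<union> \<Union>(set (M @ [\<Gamma>])) = U' \<union> \<Gamma>" unfolding U'_def by auto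
        then show ?thesis using power_card_Un[OF \<open>finite U'\<close> finite_copy[OF that]] by simp
      qed
      then show ?thesis unfolding sum_distrib_left by (intro sum.cong) auto
    qed
    also have "\<dots> \<le> p ^ card U' * (\<Sum>\<Gamma>\<in>{\<Gamma> \<in> copies G0 n. \<Gamma> \<inter> U' \<noteq> {}}. p ^ card (\<Gamma> - U'))"
      using p_pos by (intro mult_left_mono sum_mono2) (auto simp: finite_copies U'_def)
    also have "\<dots> \<le> p ^ card U' * (2 ^ card U' * extension_bound Psi)"
      using sum_copies_meeting_le[OF \<open>finite U'\<close>] p_pos by (intro mult_left_mono) auto
    also have "\<dots> \<le> p ^ card U' * (2 ^ ((k + j) * card G0) * extension_bound Psi)"
      using \<open>card U' \<le> (k + j) * card G0\<close> extension_bound_nonneg[OF Psi_pos] p_pos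
      by (intro mult_left_mono mult_right_mono) auto
    finally show ?thesis unfolding U'_def .
  qed
  then have "(\<Sum>M\<in>connected_copies G0 n (Suc j). p ^ card (U \<union> \<Union>(set M)))
               \<le> (\<Sum>M\<in>connected_copies G0 n j.
                    p ^ card (U \<union> \<Union>(set M)) * (2 ^ ((k + j) * card G0) * extension_bound Psi))"
    unfolding sum_connected_copies_Suc[OF assms(3)] by (rule sum_mono)
  then show ?thesis by (simp add: sum_distrib_right)
qed

lemma sum_connected_copies_Un_le:
  assumes "finite U" "card U \<le> k * card G0" "1 \<le> j"
  shows "(\<Sum>M\<in>connected_copies G0 n j. p ^ card (U \<union> \<Union>(set M)))
           \<le> (\<Sum>M\<in>connected_copies G0 n 1. p ^ card (U \<union> \<Union>(set M)))
               * (2 ^ (k * card G0) * extension_bound Psi) ^ (j - 1) * 2 ^ ((\<Sum>i<j. i) * card G0)"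
  using assms(3)
proof (induction j rule: nat_induct_at_least)
  case (Suc j)
  let ?S = "\<lambda>j. \<Sum>M\<in>connected_copies G0 n j. p ^ card (U \<union> \<Union>(set M))"
  let ?x = "2 ^ (k * card G0) * extension_bound Psi"
  have "?S (Suc j) \<le> ?S j * (2 ^ ((k + j) * card G0) * extension_bound Psi)"
    by (rule sum_connected_copies_Suc_le[OF assms(1,2) Suc.hyps])
  also have "\<dots> \<le> ?S 1 * ?x ^ (j - 1) * 2 ^ ((\<Sum>i<j. i) * card G0)
                    * (2 ^ ((k + j) * card G0) * extension_bound Psi)"
    using Suc.IH extension_bound_nonneg[OF Psi_pos] by (intro mult_right_mono) auto
  also have "\<dots> = ?S 1 * (?x ^ (j - 1) * ?x) * (2 ^ ((\<Sum>i<j. i) * card G0) * 2 ^ (j * card G0))"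
    unfolding add_mult_distrib power_add by (simp only: mult_ac)
  also have "\<dots> = ?S 1 * ?x ^ (Suc j - 1) * 2 ^ ((\<Sum>i<Suc j. i) * card G0)"
    using Suc.hyps by (simp add: power_add add_mult_distrib flip: power_Suc2)
  finally show ?case .
qed simp

lemma sum_connected_copies_le:
  assumes "1 \<le> m"
  shows "(\<Sum>M\<in>connected_copies G0 n m. p ^ card (\<Union>(set M))) \<le> c_const G0 m * Phi ^ m / Psi ^ (m - 1)"
proof -
  let ?L = "extension_bound Psi"
  have "(\<Sum>M\<in>connected_copies G0 n m. p ^ card (\<Union>(set M)))
          \<le> (\<Sum>M\<in>connected_copies G0 n 1. p ^ card (\<Union>(set M))) * ?L ^ (m - 1) * 2 ^ ((\<Sum>i<m. i) * card G0)"
    using sum_connected_copies_Un_le[of "{}" 0 m] assms by simp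
  also have "\<dots> \<le> Phi / aut G0 * ?L ^ (m - 1) * 2 ^ ((\<Sum>i<m. i) * card G0)"
    using sum_connected_copies_1_le extension_bound_nonneg[OF Psi_pos] by (intro mult_right_mono) auto
  also have "\<dots> = c_const G0 m * Phi ^ m / Psi ^ (m - 1)"
    using assms aut_pos by (cases m) (simp_all add: c_const_eq extension_bound_def field_simps)
  finally show ?thesis .
qed

lemma sum_pairs_connected_copies_le:
  assumes "1 \<le> m" "1 \<le> m'"
  shows "(\<Sum>(M, M')\<in>connected_copies G0 n m \<times> connected_copies G0 n m'. p ^ card (\<Union>(set (M @ M'))))
           \<le> c_const G0 (m + m') * Phi ^ (m + m') / (Psi ^ (m + m' - 2) * min Psi 1)"
proof -
  let ?x = "2 ^ (m * card G0) * extension_bound Psi"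
  let ?B = "2 ^ (m * card G0) * extension_bound (min Psi 1) * ?x ^ (m' - 1) * 2 ^ ((\<Sum>i<m'. i) * card G0)"
  have "(\<Sum>M'\<in>connected_copies G0 n m'. p ^ card (\<Union>(set M) \<union> \<Union>(set M'))) \<le> p ^ card (\<Union>(set M)) * ?B"
    if M: "M \<in> connected_copies G0 n m" for M
  proof -
    let ?U = "\<Union>(set M)"
    have U: "finite ?U" "card ?U \<le> m * card G0"
      using finite_Union_connected_copies[OF M] card_Union_connected_copies_le[OF M] .
    let ?y = "?x ^ (m' - 1) * 2 ^ ((\<Sum>i<m'. i) * card G0)"
    have "(\<Sum>M'\<in>connected_copies G0 n m'. p ^ card (?U \<union> \<Union>(set M')))
            \<le> (\<Sum>M'\<in>connected_copies G0 n 1. p ^ card (?U \<union> \<Union>(set M'))) * ?y"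
      using sum_connected_copies_Un_le[OF U assms(2)] by (simp only: mult.assoc)
    also have "\<dots> \<le> p ^ card ?U * (2 ^ (m * card G0) * extension_bound (min Psi 1)) * ?y"
      using sum_connected_copies_1_Un_le[OF U] extension_bound_nonneg[OF Psi_pos]
      by (intro mult_right_mono) auto
    finally show ?thesis by (simp only: mult_ac)
  qed
  then have "(\<Sum>(M, M')\<in>connected_copies G0 n m \<times> connected_copies G0 n m'. p ^ card (\<Union>(set (M @ M'))))
               \<le> (\<Sum>M\<in>connected_copies G0 n m. p ^ card (\<Union>(set M))) * ?B"
    by (simp add: sum.cartesian_product[symmetric] sum_distrib_right sum_mono)
  also have "\<dots> \<le> c_const G0 m * Phi ^ m / Psi ^ (m - 1) * ?B"
    using sum_connected_copies_le[OF assms(1)] extension_bound_nonneg[OF Psi_pos]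
      extension_bound_nonneg[of "min Psi 1"] Psi_pos
    by (intro mult_right_mono) auto
  also have "\<dots> = c_const G0 (m + m') * Phi ^ (m + m') / (Psi ^ (m + m' - 2) * min Psi 1)"
  proof -
    obtain a b where ab: "m = Suc a" "m' = Suc b" using assms by (metis Suc_le_D One_nat_def)
    have two_pow: "(2::real) ^ ((\<Sum>i<m + m'. i) * card G0)
            = 2 ^ ((\<Sum>i<m. i) * card G0) * 2 ^ (m * card G0) * (2 ^ (m * card G0)) ^ b
              * 2 ^ ((\<Sum>i<m'. i) * card G0)"
      unfolding sum_lessThan_add ab by (simp add: algebra_simps power_add flip: power_mult)
    show ?thesis
      unfolding c_const_eq two_pow extension_bound_def
      using aut_pos Psi_pos by (simp add: ab field_simps power_mult_distrib power_add)
  qed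
  finally show ?thesis .
qed

end


theorem lemma5p5:
  fixes G0 :: "'a set set" and n m mh :: nat and p :: real
  assumes "is_graph G0" and "G0 \<noteq> {}"
    and "0 < p" and "p < 1"
    and "1 \<le> m" and "1 \<le> mh"
  shows "(\<Sum>M\<in>connected_copies G0 n m. p ^ card (\<Union>(set M)))
           \<le> c_const G0 m * (real n ^ (m * card (verts G0)) * p ^ (m * card G0))
               / Psi_min G0 n p ^ (m - 1)
    \<and>     (\<Sum>(M, Mh)\<in>connected_copies G0 n m \<times> connected_copies G0 n mh.
              p ^ card (\<Union>(set (M @ Mh))))
          \<le> c_const G0 (m + mh)
               * (real n ^ ((m + mh) * card (verts G0)) * p ^ ((m + mh) * card G0))
               / (Psi_min G0 n p ^ (m + mh - 2) * min (Psi_min G0 n p) 1)"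
proof (cases "n = 0")
  case True
  interpret pattern_graph G0 using assms(1) by unfold_locales
  have no_copies: "connected_copies G0 n m = {}"
    using connected_copies_0_empty[OF assms(2,5)] True by simp
  have zero: "real n ^ (k * card V) = 0" if "1 \<le> k" for k
    using True card_V_pos[OF assms(2)] that by simp
  have "1 \<le> m + mh" using assms(5) by simp
  then show ?thesis unfolding no_copies zero[OF assms(5)] zero[OF \<open>1 \<le> m + mh\<close>] by simp
next
  case False
  interpret copy_sums G0 n p using assms False by unfold_locales auto
  show ?thesis
    using sum_connected_copies_le[OF assms(5)] sum_pairs_connected_copies_le[OF assms(5,6)]
    unfolding Phi_power by simp
qed

end
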